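(* Let $(A,B)$ be a Katsura pair, with associated action $\phi_{A,B}:\mathbb{Z}\times E_A^0\to\operatorname{PIso}(E_A^* )$. Then $a_i^k\in\ker(\phi_{A,B})$ if and only if $\frac{kB_\mu}{A_\mu}\in\mathbb{Z}$ for all $\mu\in iE_A^*$.
   Context: Katsura pair: $N\in\mathbb{N}$, $A\in M_N(\mathbb{N})$ (nonnegative integers), $B\in M_N(\mathbb{Z})$ with $A_{ij}=0\Rightarrow B_{ij}=0$. Graph $E_A$: vertices $\{1,\dots,N\}$, edges $e_{i,j,m}$ ($0\le m<A_{ij}$), $r(e_{i,j,m})=i$, $s(e_{i,j,m})=j$. Finite paths $\mu_1\cdots\mu_n$ with $s(\mu_t)=r(\mu_{t+1})$ (vertices are paths of length 0); $iE_A^*$ are the finite paths with range $i$. For $\mu=e_{i_0,i_1,r_1}\cdots e_{i_{n-1},i_n,r_n}$, $A_\mu=\prod_{t=0}^{n-1}A_{i_ti_{t+1}}$ and $B_\mu=\prod_{t=0}^{n-1}B_{i_ti_{t+1}}$ (empty product $=1$). The group bundle $\mathbb{Z}\times E_A^0$ has elements $a_i^k$ ($k\in\mathbb{Z}$, $i$ a vertex) with $a_i^ka_i^l=a_i^{k+l}$. It acts by $a_i^k\cdot e_{i,j,m}=e_{i,j,\hat m}$, $a_i^k|_{e_{i,j,m}}=a_j^{\hat k}$ where $kB_{ij}+m=\hat kA_{ij}+\hat m$, $0\le\hat m<A_{ij}$, extended to paths by $g\cdot(e\nu)=(g\cdot e)(g|_e\cdot\nu)$; $\phi_{A,B}(a_i^k)$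 is the resulting bijection of $iE_A^*$. $\ker(\phi_{A,B})$ is the set of $a_i^k$ acting as the identity on $iE_A^*$. *)

theory Defs
  imports Complex_Main
begin

definition katsura_pair :: "nat \<Rightarrow> (nat \<Rightarrow> nat \<Rightarrow> nat) \<Rightarrow> (nat \<Rightarrow> nat \<Rightarrow> int) \<Rightarrow> bool" where
  "katsura_pair N A B \<longleftrightarrow> (\<forall>i\<in>{1..N}. \<forall>j\<in>{1..N}. A i j = 0 \<longrightarrow> B i j = 0)"

text \<open>Edge e_{i,j,m} is the triple (i,j,m); range i, source j.\<close>
definition is_edge :: "nat \<Rightarrow> (nat \<Rightarrow> nat \<Rightarrow> nat) \<Rightarrow> nat \<times> nat \<times> nat \<Rightarrow> bool" where
  "is_edge N A e = (case e of (i, j, m) \<Rightarrow> i \<in> {1..N} \<and> j \<in> {1..N} \<and> m < A i j)"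

text \<open>A finite path with range i, given as its list of edges (empty list = vertex i).\<close>
fun path_from :: "nat \<Rightarrow> (nat \<Rightarrow> nat \<Rightarrow> nat) \<Rightarrow> nat \<Rightarrow> (nat \<times> nat \<times> nat) list \<Rightarrow> bool" where
  "path_from N A i [] = (i \<in> {1..N})"
| "path_from N A i ((i', j, m) # rest) =
     (i' = i \<and> is_edge N A (i', j, m) \<and> path_from N A j rest)"

definition paths_at :: "nat \<Rightarrow> (nat \<Rightarrow> nat \<Rightarrow> nat) \<Rightarrow> nat \<Rightarrow> (nat \<times> nat \<times> nat) list set" where
  "paths_at N A i = {\<mu>. path_from N A i \<mu>}"

fun katsura_act :: "(nat \<Rightarrow> nat \<Rightarrow> nat) \<Rightarrow> (nat \<Rightarrow> nat \<Rightarrow> int) \<Rightarrow> int \<Rightarrow> (nat \<times> nat \<times> nat) list \<Rightarrow> (nat \<times> nat \<times> nat) list" where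
  "katsura_act A B k [] = []"
| "katsura_act A B k ((i, j, m) # rest) =
     (let t = k * B i j + int m
      in (i, j, nat (t mod int (A i j))) # katsura_act A B (t div int (A i j)) rest)"

definition in_kernel :: "nat \<Rightarrow> (nat \<Rightarrow> nat \<Rightarrow> nat) \<Rightarrow> (nat \<Rightarrow> nat \<Rightarrow> int) \<Rightarrow> nat \<Rightarrow> int \<Rightarrow> bool" where
  "in_kernel N A B i k \<longleftrightarrow> (\<forall>\<mu>\<in>paths_at N A i. katsura_act A B k \<mu> = \<mu>)"

definition A_path :: "(nat \<Rightarrow> nat \<Rightarrow> nat) \<Rightarrow> (nat \<times> nat \<times> nat) list \<Rightarrow> nat" where
  "A_path A \<mu> = prod_list (map (\<lambda>(i, j, m). A i j) \<mu>)"

definition B_path :: "(nat \<Rightarrow> nat \<Rightarrow> int) \<Rightarrow> (nat \<times> nat \<times> nat) list \<Rightarrow> int" where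
  "B_path B \<mu> = prod_list (map (\<lambda>(i, j, m). B i j) \<mu>)"

end

theory Submission
  imports Defs "HOL-Library.Sublist"
begin

text \<open>On an edge e with A e = a > 0 and B e = b, the parameter k keeps the label m < a iff
  a divides k b (the label becomes (k b + m) mod a), and then k b / a is passed on to the
  rest of the path. Inductively, a path is fixed iff A \<nu> divides k B \<nu> for each of its
  prefixes \<nu>; since the paths at a vertex are closed under prefixes, it suffices to ask this
  of the paths themselves.\<close>

lemma A_path_Nil [simp]: "A_path A [] = 1"
  and A_path_Cons [simp]: "A_path A ((i, j, m) # \<mu>) = A i j * A_path A \<mu>"
  by (simp_all add: A_path_def)

lemma B_path_Nil [simp]: "B_path B [] = 1"
  and B_path_Cons [simp]: "B_path B ((i, j, m) # \<mu>) = B i j * B_path B \<mu>"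
  by (simp_all add: B_path_def)

abbreviation labels_bounded :: "(nat \<Rightarrow> nat \<Rightarrow> nat) \<Rightarrow> (nat \<times> nat \<times> nat) list \<Rightarrow> bool" where
  "labels_bounded A \<mu> \<equiv> list_all (\<lambda>(i, j, m). m < A i j) \<mu>"

lemma A_path_pos: "labels_bounded A \<mu> \<Longrightarrow> 0 < A_path A \<mu>"
  by (induction \<mu>) auto

lemma mod_add_eq_self_iff:
  fixes a x m :: int
  assumes "0 \<le> m" "m < a"
  shows "(x + m) mod a = m \<longleftrightarrow> a dvd x"
proof -
  have "(x + m) mod a = m \<longleftrightarrow> (x + m) mod a = m mod a"
    using assms by simp
  also have "\<dots> \<longleftrightarrow> a dvd x"
    by (simp add: mod_eq_dvd_iff)
  finally show ?thesis .
qed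

lemma katsura_act_Cons_fixed_iff:
  assumes "m < A i j"
  shows "katsura_act A B k ((i, j, m) # \<mu>) = (i, j, m) # \<mu> \<longleftrightarrow>
    int (A i j) dvd k * B i j \<and> katsura_act A B (k * B i j div A i j) \<mu> = \<mu>"
proof -
  define a where "a = int (A i j)"
  define t where "t = k * B i j + int m"
  have m: "0 \<le> int m" "int m < a"
    using assms by (simp_all add: a_def)
  have "0 \<le> t mod a"
    using m by simp
  then have "nat (t mod a) = m \<longleftrightarrow> t mod a = int m"
    by auto
  also have "\<dots> \<longleftrightarrow> a dvd k * B i j"
    unfolding t_def using m by (rule mod_add_eq_self_iff)
  finally have label: "nat (t mod a) = m \<longleftrightarrow> a dvd k * B i j" .
  have "t div a = k * B i j div a" if "a dvd k * B i j"
    using that m by (auto simp: t_def)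
  with label show ?thesis
    by (auto simp: Let_def a_def t_def)
qed

lemma dvd_mult_div_cancel_iff:
  fixes a d x y :: int
  assumes "a \<noteq> 0" "a dvd x"
  shows "a * d dvd x * y \<longleftrightarrow> d dvd x div a * y"
  using assms by (auto elim!: dvdE)

lemma all_prefix_Cons_iff:
  "(\<forall>\<nu>. prefix \<nu> (x # xs) \<longrightarrow> P \<nu>) \<longleftrightarrow> P [] \<and> (\<forall>\<nu>. prefix \<nu> xs \<longrightarrow> P (x # \<nu>))"
  by (auto simp: prefix_Cons)

lemma katsura_act_fixed_iff_prefixes_dvd:
  assumes "labels_bounded A \<mu>"
  shows "katsura_act A B k \<mu> = \<mu> \<longleftrightarrow>
    (\<forall>\<nu>. prefix \<nu> \<mu> \<longrightarrow> int (A_path A \<nu>) dvd k * B_path B \<nu>)"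
  using assms
proof (induction \<mu> arbitrary: k)
  case Nil
  then show ?case by simp
next
  case (Cons e \<mu>)
  obtain i j m where e: "e = (i, j, m)"
    by (cases e)
  let ?a = "int (A i j)" and ?b = "B i j"
  have m: "m < A i j" and \<mu>: "labels_bounded A \<mu>"
    using Cons.prems by (simp_all add: e)
  have "katsura_act A B k (e # \<mu>) = e # \<mu> \<longleftrightarrow>
      ?a dvd k * ?b \<and> (\<forall>\<nu>. prefix \<nu> \<mu> \<longrightarrow> int (A_path A \<nu>) dvd k * ?b div ?a * B_path B \<nu>)"
    using katsura_act_Cons_fixed_iff[of m A i j, OF m] Cons.IH[OF \<mu>] by (simp add: e)
  also have "\<dots> \<longleftrightarrow> (\<forall>\<nu>. prefix \<nu> \<mu> \<longrightarrow> ?a * int (A_path A \<nu>) dvd k * ?b * B_path B \<nu>)"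
  proof -
    have "?a \<noteq> 0"
      using m by simp
    moreover have "?a dvd k * ?b"
      if "\<forall>\<nu>. prefix \<nu> \<mu> \<longrightarrow> ?a * int (A_path A \<nu>) dvd k * ?b * B_path B \<nu>"
      using that[rule_format, of "[]"] by simp
    ultimately show ?thesis
      using dvd_mult_div_cancel_iff[of ?a "k * ?b"] by blast
  qed
  also have "\<dots> \<longleftrightarrow> (\<forall>\<nu>. prefix \<nu> (e # \<mu>) \<longrightarrow> int (A_path A \<nu>) dvd k * B_path B \<nu>)"
    by (simp add: all_prefix_Cons_iff e mult.assoc)
  finally show ?case .
qed

lemma path_from_labels_bounded: "path_from N A i \<mu> \<Longrightarrow> labels_bounded A \<mu>"
  by (induction \<mu> arbitrary: i) (auto simp: is_edge_def)

lemma path_from_prefix: "prefix \<nu> \<mu> \<Longrightarrow> path_from N A i \<mu> \<Longrightarrow> path_from N A i \<nu>"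
  by (induction \<mu> arbitrary: \<nu> i) (auto simp: prefix_Cons is_edge_def)

lemma in_kernel_iff_dvd:
  "in_kernel N A B i k \<longleftrightarrow> (\<forall>\<mu>\<in>paths_at N A i. int (A_path A \<mu>) dvd k * B_path B \<mu>)"
proof -
  have "in_kernel N A B i k \<longleftrightarrow> (\<forall>\<mu>\<in>paths_at N A i.
      \<forall>\<nu>. prefix \<nu> \<mu> \<longrightarrow> int (A_path A \<nu>) dvd k * B_path B \<nu>)"
    by (simp add: in_kernel_def paths_at_def katsura_act_fixed_iff_prefixes_dvd path_from_labels_bounded)
  also have "\<dots> \<longleftrightarrow> (\<forall>\<mu>\<in>paths_at N A i. int (A_path A \<mu>) dvd k * B_path B \<mu>)"
    by (auto simp: paths_at_def intro: path_from_prefix)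
  finally show ?thesis .
qed

theorem proposition3p1:
  fixes N :: nat and A :: "nat \<Rightarrow> nat \<Rightarrow> nat" and B :: "nat \<Rightarrow> nat \<Rightarrow> int"
    and i :: nat and k :: int
  assumes "katsura_pair N A B" and "i \<in> {1..N}"
  shows "in_kernel N A B i k \<longleftrightarrow>
    (\<forall>\<mu>\<in>paths_at N A i.
       (of_int (k * B_path B \<mu>) / of_nat (A_path A \<mu>) :: rat) \<in> \<int>)"
proof -
  have "(of_int (k * B_path B \<mu>) / of_nat (A_path A \<mu>) :: rat) \<in> \<int> \<longleftrightarrow>
      int (A_path A \<mu>) dvd k * B_path B \<mu>" if "\<mu> \<in> paths_at N A i" for \<mu>
    using that A_path_pos[OF path_from_labels_bounded, of N A i \<mu>]
      of_int_div_of_int_in_Ints_iff[of "k * B_path B \<mu>" "int (A_path A \<mu>)", where 'a = rat]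
    by (simp add: paths_at_def)
  then show ?thesis
    by (simp add: in_kernel_iff_dvd)
qed

end
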